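(* Let $n\ge8$, and let $d_{\rm YHZ}$ and $d_{\rm QXY}$ be as defined in the context, under the assumption stated there. Then $d_{\rm YHZ}\ge d_{\rm QXY}$.
   Context: Let $a_0,\dots,a_n$ be indeterminates, $P=\sum_{i=0}^na_ix^i$, $\boldsymbol F=(P^{(0)},\dots,P^{(n)})$ with $P^{(k)}$ the $k$-th derivative. $\mathcal M(n)$ is the set of nonincreasing tuples $\boldsymbol\mu=(\mu_1,\dots,\mu_m)$ of positive integers with sum $n$; its conjugate is $\bar{\boldsymbol\mu}=(\bar\mu_1,\bar\mu_2,\dots)$, $\bar\mu_i=\#\{j:\mu_j\ge i\}$; tuples are compared lexicographically after padding with zeros. Subresultants: for $\boldsymbol F=(F_0,\dots,F_t)$, $d_i=\deg F_i$ (formal degree), and $\boldsymbol\delta\in\mathbb{Z}_{\ge0}^t$ with $|\boldsymbol\delta|=\sum\delta_i\le d_0$, put $\delta_0=\max_{\delta_i\neq0,\,i\ge1}(d_i+\delta_i)-d_0$ if this max is $\ge d_0$, else $\delta_0=1$; $\boldsymbol M_{\boldsymbol\delta}(\boldsymbol F)$ is the $(\delta_0+|\boldsymbol\delta|)\times(\delta_0+d_0)$ matrix with rows the coefficient vectors of $x^{\delta_0-1}F_0,\dots,F_0,x^{\delta_1-1}F_1,\dots,F_1,\dots,x^{\delta_t-1}F_t,\dots,F_t$ w.r.t. $x^{\delta_0+d_0-1},\dots,1$; $R_{\boldsymbol\delta}(\boldsymbol F)=\operatorname{dp}\boldsymbol M_{\boldsymbol\delta}(\boldsymbol F)$, where for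 a $p\times q$ matrix ($p\le q$) $\operatorname{dp}\boldsymbol M=\sum_{i=0}^{q-p}\det[\boldsymbol M_1,\dots,\boldsymbol M_{p-1},\boldsymbol M_{q-i}]x^i$; $\overline{R_{\boldsymbol\delta}(\boldsymbol F)}$ is the coefficient of $x^{d_0-|\boldsymbol\delta|}$. For $\boldsymbol\delta$ of length $t\le n$, $R_{\boldsymbol\delta}(\boldsymbol F)=R_{\boldsymbol\delta}(P^{(0)},\dots,P^{(t)})$. Discriminant sequence: for $G=\sum_{i=0}^s b_ix^i$ (formal degree $s$), the discrimination matrix is the $2s\times2s$ matrix whose rows $2k-1$, $2k$ ($k=1,\dots,s$) are the coefficient vectors of $x^{s-k}G$ and $x^{s-k}G'$ w.r.t. $x^{2s-1},\dots,1$; $D_j(G)$ is its leading principal $2j\times2j$ minor. $d_{\rm YHZ}$: for $\boldsymbol\mu\in\mathcal M(n)$ let $\tilde G_0=P$, $\tilde G_i=R_{\bar\mu_i}(\tilde G_{i-1},\tilde G_{i-1}')$ ($i\ge1$) of formal degree $s_i=\sum_{k=i+1}^{\mu_1}\bar\mu_k$; $\mathcal S_{\boldsymbol\mu}$ consists of $D_j(\tilde G_i)$ for $0\le i\le\mu_1-2$, $\bar\mu_{i+1}+1\le j\le s_i$; $D_{s_{\mu_1-1}}(\tilde G_{\mu_1-1})$; and $D_j(\tilde G_i)$ for $0\le i\le\mu_1-1$, $1\le j\le\bar\mu_{i+1}$. $d_{\rm YHZ}$ is the maximal total degree in $a_0,\dots,a_n$ over $\bigcup_{\boldsymbol\mu}\mathcal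 S_{\boldsymbol\mu}$. Assumption: for every $\boldsymbol\mu$ and $0\le i\le\mu_1-1$, the coefficient of $x^{s_i}$ in $\tilde G_i$ and $\overline{R_{s_i}(\tilde G_i,\tilde G_i')}$ are not identically zero. $d_{\rm QXY}$: for $\boldsymbol\mu\in\mathcal M(n)$ let $G_0=P$, $G_i=R_{(\bar\mu_1,\dots,\bar\mu_i)}(\boldsymbol F)$ of formal degree $n-(\bar\mu_1+\dots+\bar\mu_i)$; $\mathcal T_{\boldsymbol\mu}$ consists of the coefficients of $R_{\boldsymbol\gamma}(\boldsymbol F)$ for $\boldsymbol\gamma\in\mathcal M(n)$, $\boldsymbol\gamma\succeq\bar{\boldsymbol\mu}$, and $D_j(G_i)$ for $0\le i\le\mu_1-1$, $1\le j\le\bar\mu_{i+1}$. $d_{\rm QXY}$ is the maximal total degree in $a_0,\dots,a_n$ over $\bigcup_{\boldsymbol\mu}\mathcal T_{\boldsymbol\mu}$. *)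

theory Defs
  imports "HOL-Library.Poly_Mapping" "Jordan_Normal_Form.Determinant"
begin

section \<open>Multivariate integer polynomials in the indeterminates a_0, a_1, ...\<close>

type_synonym mp = "(nat \<Rightarrow>\<^sub>0 nat) \<Rightarrow>\<^sub>0 int"

definition var :: "nat \<Rightarrow> mp" where
  "var i = Poly_Mapping.single (Poly_Mapping.single i 1) 1"

text \<open>Total degree (the zero polynomial gets degree 0).\<close>
definition total_degree :: "mp \<Rightarrow> nat" where
  "total_degree p = Max (insert 0 ((\<lambda>m. sum (Poly_Mapping.lookup m) (Poly_Mapping.keys m)) ` Poly_Mapping.keys p))"

section \<open>Univariate polynomials in x over mp, as coefficient functions
  (coefficient of x^k); formal degrees are tracked separately.\<close>

type_synonym upoly = "nat \<Rightarrow> mp"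

definition Pgen :: "nat \<Rightarrow> upoly" where
  "Pgen n k = (if k \<le> n then var k else 0)"

definition deriv :: "upoly \<Rightarrow> upoly" where
  "deriv c k = of_nat (Suc k) * c (Suc k)"

text \<open>Entry in column cl (0-based, column 0 corresponds to x^(N-1)) of the
  coefficient vector of x^j * c w.r.t. x^(N-1), ..., 1.\<close>
definition rowvec :: "upoly \<Rightarrow> nat \<Rightarrow> nat \<Rightarrow> nat \<Rightarrow> mp" where
  "rowvec c j N cl = (let e = N - 1 - cl in if j \<le> e then c (e - j) else 0)"

definition detf :: "nat \<Rightarrow> (nat \<Rightarrow> nat \<Rightarrow> mp) \<Rightarrow> mp" where
  "detf p A = det (mat p p (\<lambda>(r, k). A r k))"

text \<open>dp of a p x q matrix A (p \<le> q): coefficient of x^i is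
  det [M_1, ..., M_(p-1), M_(q-i)] for i \<le> q - p, zero otherwise.\<close>
definition dp :: "nat \<Rightarrow> nat \<Rightarrow> (nat \<Rightarrow> nat \<Rightarrow> mp) \<Rightarrow> upoly" where
  "dp p q A i = (if i \<le> q - p then
      detf p (\<lambda>r k. if k < p - 1 then A r k else A r (q - 1 - i)) else 0)"

text \<open>delta_0 for F = (F_0,...,F_t) with formal degrees ds = [d_0,...,d_t] and
  delta = [delta_1,...,delta_t].\<close>
definition delta0 :: "nat list \<Rightarrow> nat list \<Rightarrow> nat" where
  "delta0 ds \<delta> =
     (let S = {ds ! i + \<delta> ! (i - 1) | i. 1 \<le> i \<and> i \<le> length \<delta> \<and> \<delta> ! (i - 1) \<noteq> 0}
      in if S \<noteq> {} \<and> Max S \<ge> ds ! 0 then Max S - ds ! 0 else 1)"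

text \<open>Subresultant R_delta(F). Fs = [(d_0,F_0),...,(d_t,F_t)], \<delta> = [delta_1..delta_t].
  Rows: x^(delta_i - 1) F_i, ..., F_i for i = 0..t; columns x^(delta_0+d_0-1),...,1.\<close>
definition subres :: "(nat \<times> upoly) list \<Rightarrow> nat list \<Rightarrow> upoly" where
  "subres Fs \<delta> =
     (let ds = map fst Fs;
          d0 = delta0 ds \<delta>;
          dl = d0 # \<delta>;
          rows = concat (map (\<lambda>i. map (\<lambda>j. (snd (Fs ! i), dl ! i - 1 - j)) [0..<dl ! i])
                             [0..<length Fs]);
          p = length rows;
          q = d0 + ds ! 0
      in dp p q (\<lambda>r cl. rowvec (fst (rows ! r)) (snd (rows ! r)) q cl))"

definition Fs :: "nat \<Rightarrow> nat \<Rightarrow> (nat \<times> upoly) list" where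
  "Fs n t = map (\<lambda>k. (n - k, (deriv ^^ k) (Pgen n))) [0..<Suc t]"

definition RF :: "nat \<Rightarrow> nat list \<Rightarrow> upoly" where
  "RF n \<gamma> = subres (Fs n (length \<gamma>)) \<gamma>"

text \<open>D_j(G) for G of formal degree s: leading principal 2j x 2j minor of the
  2s x 2s discrimination matrix (rows 2k-1, 2k: x^(s-k) G, x^(s-k) G').\<close>
definition Dmin :: "nat \<Rightarrow> upoly \<Rightarrow> nat \<Rightarrow> mp" where
  "Dmin s G j = detf (2 * j)
     (\<lambda>r cl. rowvec (if even r then G else deriv G) (s - (r div 2 + 1)) (2 * s) cl)"

definition Mpart :: "nat \<Rightarrow> nat list set" where
  "Mpart n = {\<mu>. sorted_wrt (\<ge>) \<mu> \<and> (\<forall>x\<in>set \<mu>. 0 < x) \<and> sum_list \<mu> = n}"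

definition conj :: "nat list \<Rightarrow> nat \<Rightarrow> nat" where
  "conj \<mu> i = card {j. j < length \<mu> \<and> \<mu> ! j \<ge> i}"

definition conj_list :: "nat list \<Rightarrow> nat list" where
  "conj_list \<mu> = map (conj \<mu>) [1..<Suc (hd \<mu>)]"

definition pad :: "nat list \<Rightarrow> nat \<Rightarrow> nat" where
  "pad xs i = (if i < length xs then xs ! i else 0)"

definition lex_ge :: "nat list \<Rightarrow> nat list \<Rightarrow> bool" where
  "lex_ge xs ys \<longleftrightarrow> (\<forall>i. pad xs i = pad ys i) \<or>
     (\<exists>k. (\<forall>i<k. pad xs i = pad ys i) \<and> pad xs k > pad ys k)"

definition sdeg :: "nat list \<Rightarrow> nat \<Rightarrow> nat" where
  "sdeg \<mu> i = (\<Sum>k = Suc i..hd \<mu>. conj \<mu> k)"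

fun Gt :: "nat \<Rightarrow> nat list \<Rightarrow> nat \<Rightarrow> upoly" where
  "Gt n \<mu> 0 = Pgen n"
| "Gt n \<mu> (Suc i) =
     subres [(sdeg \<mu> i, Gt n \<mu> i), (sdeg \<mu> i - 1, deriv (Gt n \<mu> i))] [conj \<mu> (Suc i)]"

definition Sset :: "nat \<Rightarrow> nat list \<Rightarrow> mp set" where
  "Sset n \<mu> =
     {Dmin (sdeg \<mu> i) (Gt n \<mu> i) j | i j.
        i + 2 \<le> hd \<mu> \<and> conj \<mu> (i + 1) + 1 \<le> j \<and> j \<le> sdeg \<mu> i}
   \<union> {Dmin (sdeg \<mu> (hd \<mu> - 1)) (Gt n \<mu> (hd \<mu> - 1)) (sdeg \<mu> (hd \<mu> - 1))}
   \<union> {Dmin (sdeg \<mu> i) (Gt n \<mu> i) j | i j.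
        i + 1 \<le> hd \<mu> \<and> 1 \<le> j \<and> j \<le> conj \<mu> (i + 1)}"

definition d_YHZ :: "nat \<Rightarrow> nat" where
  "d_YHZ n = Max (total_degree ` (\<Union>\<mu>\<in>Mpart n. Sset n \<mu>))"

definition YHZ_assumption :: "nat \<Rightarrow> bool" where
  "YHZ_assumption n \<longleftrightarrow> (\<forall>\<mu>\<in>Mpart n. \<forall>i. i + 1 \<le> hd \<mu> \<longrightarrow>
      Gt n \<mu> i (sdeg \<mu> i) \<noteq> 0 \<and>
      subres [(sdeg \<mu> i, Gt n \<mu> i), (sdeg \<mu> i - 1, deriv (Gt n \<mu> i))] [sdeg \<mu> i] 0 \<noteq> 0)"

fun Gq :: "nat \<Rightarrow> nat list \<Rightarrow> nat \<Rightarrow> upoly" where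
  "Gq n \<mu> 0 = Pgen n"
| "Gq n \<mu> (Suc i) = RF n (take (Suc i) (conj_list \<mu>))"

definition Tset :: "nat \<Rightarrow> nat list \<Rightarrow> mp set" where
  "Tset n \<mu> =
     {RF n \<gamma> k | \<gamma> k. \<gamma> \<in> Mpart n \<and> lex_ge \<gamma> (conj_list \<mu>) \<and> k \<le> n - sum_list \<gamma>}
   \<union> {Dmin (n - sum_list (take i (conj_list \<mu>))) (Gq n \<mu> i) j | i j.
        i + 1 \<le> hd \<mu> \<and> 1 \<le> j \<and> j \<le> conj \<mu> (i + 1)}"

definition d_QXY :: "nat \<Rightarrow> nat" where
  "d_QXY n = Max (total_degree ` (\<Union>\<mu>\<in>Mpart n. Tset n \<mu>))"

end

theory Submission
  imports Defs
begin

text \<open>Every polynomial occurring in either construction is homogeneous in \<open>a\<^sub>0, \<dots>, a\<^sub>n\<close>: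
  a subresultant or discriminant minor whose matrix has \<open>p\<close> rows with entries homogeneous of
  degree \<open>h\<close> is homogeneous of degree \<open>p h\<close>. So the coefficients of \<open>R\<^sub>\<gamma>(F)\<close> have degree
  at most \<open>2n - 1\<close>, and \<open>G\<^sub>i\<close> has degree \<open>\<delta>\<^sub>0 + S \<le> 2S - 1\<close> with
  \<open>S = \<mu>bar\<^sub>1 + \<dots> + \<mu>bar\<^sub>i\<close>, whence \<open>D\<^sub>j(G\<^sub>i)\<close> with \<open>j \<le> \<mu>bar\<^sub>i\<^sub>+\<^sub>1 \<le> n - S\<close> has
  degree at most \<open>2j(2S - 1)\<close>. Maximising over \<open>S + j \<le> n\<close> bounds \<open>d\<^sub>Q\<^sub>X\<^sub>Y\<close> by
  \<open>2(2b - 1)(2a - 1)\<close>, where \<open>a = \<lceil>(n-1)/2\<rceil>\<close> and \<open>b = \<lfloor>(n-1)/2\<rfloor>\<close>, once \<open>n \<ge> 8\<close>.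
  The bound is attained on the YHZ side: for the partition with conjugate \<open>(a, b, 1)\<close> the
  polynomial \<open>Gt n \<mu> 2\<close> is linear, so its \<open>D\<^sub>1\<close> is the square of its leading coefficient,
  which is homogeneous of degree \<open>(2b - 1)(2a - 1)\<close> and nonzero by the standing assumption.\<close>

section \<open>Homogeneous polynomials\<close>

definition monomial_degree :: "(nat \<Rightarrow>\<^sub>0 nat) \<Rightarrow> nat" where
  "monomial_degree m = sum (Poly_Mapping.lookup m) (Poly_Mapping.keys m)"

definition homogeneous :: "nat \<Rightarrow> mp \<Rightarrow> bool" where
  "homogeneous h p \<longleftrightarrow> (\<forall>m\<in>Poly_Mapping.keys p. monomial_degree m = h)"

lemma monomial_degree_eq_sum:
  "finite S \<Longrightarrow> Poly_Mapping.keys m \<subseteq> S \<Longrightarrow> monomial_degree m = sum (Poly_Mapping.lookup m) S"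
  unfolding monomial_degree_def by (rule sum.mono_neutral_left) (auto simp: in_keys_iff)

lemma monomial_degree_add: "monomial_degree (a + b) = monomial_degree a + monomial_degree b"
proof -
  let ?S = "Poly_Mapping.keys a \<union> Poly_Mapping.keys b"
  have "monomial_degree (a + b) = sum (Poly_Mapping.lookup (a + b)) ?S"
    by (rule monomial_degree_eq_sum) (simp_all add: keys_add)
  also have "\<dots> = sum (Poly_Mapping.lookup a) ?S + sum (Poly_Mapping.lookup b) ?S"
    by (simp add: lookup_add sum.distrib)
  also have "\<dots> = monomial_degree a + monomial_degree b"
    by (simp add: monomial_degree_eq_sum[of ?S])
  finally show ?thesis .
qed

lemma homogeneous_zero [simp]: "homogeneous h 0"
  by (simp add: homogeneous_def)

lemma homogeneous_mult: "homogeneous a p \<Longrightarrow> homogeneous b q \<Longrightarrow> homogeneous (a + b) (p * q)"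
  using keys_mult[of p q] unfolding homogeneous_def by (force simp: monomial_degree_add)

lemma homogeneous_of_int: "homogeneous 0 (of_int k)"
proof -
  have "Poly_Mapping.keys (of_int k :: mp) \<subseteq> {0}"
    by (simp add: single_of_int[symmetric])
  then show ?thesis unfolding homogeneous_def by (auto simp: monomial_degree_def)
qed

lemma homogeneous_of_nat: "homogeneous 0 (of_nat k)"
  using homogeneous_of_int[of "int k"] by simp

lemma homogeneous_var: "homogeneous 1 (var i)"
  unfolding homogeneous_def var_def monomial_degree_def by simp

lemma homogeneous_sum: "(\<And>x. x \<in> A \<Longrightarrow> homogeneous h (f x)) \<Longrightarrow> homogeneous h (sum f A)"
  using keys_sum[of f A] unfolding homogeneous_def by blast

lemma homogeneous_prod:
  "finite A \<Longrightarrow> (\<And>x. x \<in> A \<Longrightarrow> homogeneous h (f x)) \<Longrightarrow> homogeneous (card A * h) (prod f A)"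
proof (induction A rule: finite_induct)
  case empty
  then show ?case by (simp add: homogeneous_def monomial_degree_def)
next
  case (insert x F)
  then show ?case using homogeneous_mult[of h "f x" "card F * h" "prod f F"] by (simp add: add.commute)
qed

lemma homogeneous_detf:
  assumes "\<And>r k. r < p \<Longrightarrow> k < p \<Longrightarrow> homogeneous h (A r k)"
  shows "homogeneous (p * h) (detf p A)"
proof -
  have "homogeneous (p * h) (of_int (sign \<pi>) * (\<Prod>i = 0..<p. A i (\<pi> i)))"
    if "\<pi> permutes {0..<p}" for \<pi>
  proof -
    have "homogeneous (card {0..<p} * h) (\<Prod>i = 0..<p. A i (\<pi> i))"
      using that by (intro homogeneous_prod assms) (auto dest: permutes_in_image)
    then show ?thesis using homogeneous_mult[OF homogeneous_of_int] by fastforce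
  qed
  then show ?thesis
    unfolding detf_def det_def by (auto intro: homogeneous_sum)
qed

lemma total_degree_le_if_homogeneous: "homogeneous h p \<Longrightarrow> total_degree p \<le> h"
  unfolding total_degree_def homogeneous_def monomial_degree_def by (auto intro!: Max.boundedI)

lemma total_degree_eq_if_homogeneous:
  assumes "homogeneous h p" and "p \<noteq> 0"
  shows "total_degree p = h"
proof -
  obtain m where "m \<in> Poly_Mapping.keys p"
    using assms(2) by (metis keys_eq_empty ex_in_conv)
  then have "h \<le> total_degree p"
    using assms(1) unfolding total_degree_def homogeneous_def monomial_degree_def
    by (metis (no_types, lifting) Max_ge finite_imageI finite_insert finite_keys image_eqI insertCI)
  then show ?thesis using total_degree_le_if_homogeneous[OF assms(1)] by simp
qed

section \<open>Homogeneity of subresultants and discriminant minors\<close>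

definition homogeneous_coeffs :: "nat \<Rightarrow> upoly \<Rightarrow> bool" where
  "homogeneous_coeffs h c \<longleftrightarrow> (\<forall>k. homogeneous h (c k))"

lemma homogeneous_coeffs_Pgen: "homogeneous_coeffs 1 (Pgen n)"
  unfolding homogeneous_coeffs_def Pgen_def using homogeneous_var by (auto simp: homogeneous_def)

lemma homogeneous_coeffs_deriv: "homogeneous_coeffs h c \<Longrightarrow> homogeneous_coeffs h (deriv c)"
  unfolding homogeneous_coeffs_def deriv_def using homogeneous_mult[OF homogeneous_of_nat] by (metis add_0)

lemma homogeneous_coeffs_deriv_iter: "homogeneous_coeffs h c \<Longrightarrow> homogeneous_coeffs h ((deriv ^^ k) c)"
  by (induction k) (auto intro: homogeneous_coeffs_deriv)

lemma homogeneous_rowvec: "homogeneous_coeffs h c \<Longrightarrow> homogeneous h (rowvec c j N cl)"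
  unfolding rowvec_def homogeneous_coeffs_def Let_def by (auto simp: homogeneous_def)

lemma homogeneous_Dmin: "homogeneous_coeffs h G \<Longrightarrow> homogeneous (2 * j * h) (Dmin s G j)"
  unfolding Dmin_def by (auto intro!: homogeneous_detf homogeneous_rowvec homogeneous_coeffs_deriv)

lemma homogeneous_coeffs_subres:
  assumes len: "length FF = Suc (length \<delta>)"
    and hom: "\<And>x. x \<in> set FF \<Longrightarrow> homogeneous_coeffs h (snd x)"
  shows "homogeneous_coeffs ((delta0 (map fst FF) \<delta> + sum_list \<delta>) * h) (subres FF \<delta>)"
proof -
  define dl where "dl = delta0 (map fst FF) \<delta> # \<delta>"
  define rows where "rows = concat (map (\<lambda>i. map (\<lambda>j. (snd (FF ! i), dl ! i - 1 - j)) [0..<dl ! i])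
                             [0..<length FF])"
  have "map (\<lambda>i. dl ! i) [0..<length FF] = dl"
    using len unfolding dl_def by (metis length_Cons map_nth)
  then have len_rows: "length rows = delta0 (map fst FF) \<delta> + sum_list \<delta>"
    unfolding rows_def by (simp add: length_concat comp_def dl_def)
  have hom_rows: "homogeneous_coeffs h (fst (rows ! r))" if "r < length rows" for r
  proof -
    have "rows ! r \<in> set rows" using that by simp
    then obtain i where "i < length FF" "fst (rows ! r) = snd (FF ! i)"
      unfolding rows_def by auto
    then show ?thesis using hom[of "FF ! i"] by simp
  qed
  show ?thesis
    unfolding homogeneous_coeffs_def
  proof
    fix k
    have "subres FF \<delta> k = dp (length rows) (delta0 (map fst FF) \<delta> + fst (FF ! 0))
        (\<lambda>r cl. rowvec (fst (rows ! r)) (snd (rows ! r)) (delta0 (map fst FF) \<delta> + fst (FF ! 0)) cl) k"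
      unfolding subres_def Let_def dl_def rows_def using len by simp
    then show "homogeneous ((delta0 (map fst FF) \<delta> + sum_list \<delta>) * h) (subres FF \<delta> k)"
      unfolding dp_def len_rows by (auto intro!: homogeneous_detf homogeneous_rowvec hom_rows simp: len_rows)
  qed
qed

lemma homogeneous_coeffs_RF:
  "homogeneous_coeffs (delta0 (map fst (Fs n (length \<gamma>))) \<gamma> + sum_list \<gamma>) (RF n \<gamma>)"
proof -
  have "homogeneous_coeffs ((delta0 (map fst (Fs n (length \<gamma>))) \<gamma> + sum_list \<gamma>) * 1)
      (subres (Fs n (length \<gamma>)) \<gamma>)"
    by (rule homogeneous_coeffs_subres)
      (auto simp: Fs_def simp del: upt_Suc
        intro!: homogeneous_coeffs_deriv_iter homogeneous_coeffs_Pgen[unfolded One_nat_def])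
  then show ?thesis unfolding RF_def by simp
qed

lemma delta0_Fs_le:
  assumes "\<delta> \<noteq> []" and "1 \<le> \<delta> ! 0" and "\<forall>x\<in>set \<delta>. x \<le> L" and "1 \<le> n"
  shows "delta0 (map fst (Fs n (length \<delta>))) \<delta> \<le> L - 1"
proof -
  define ds where "ds = map fst (Fs n (length \<delta>))"
  have ds: "ds ! i = n - i" if "i \<le> length \<delta>" for i
    using that unfolding ds_def Fs_def by (simp del: upt_Suc add: nth_append)
  define S where "S = {ds ! i + \<delta> ! (i - 1) | i. 1 \<le> i \<and> i \<le> length \<delta> \<and> \<delta> ! (i - 1) \<noteq> 0}"
  have first: "n - 1 + \<delta> ! 0 \<in> S"
  proof -
    have "1 \<le> length \<delta>" using assms(1) by (cases \<delta>) auto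
    then show ?thesis unfolding S_def using assms(2) ds[of 1] by (intro CollectI exI[of _ 1]) auto
  qed
  have bounded: "x \<le> n - 1 + L" if x: "x \<in> S" for x
  proof -
    obtain i where i: "1 \<le> i" "i \<le> length \<delta>" "x = ds ! i + \<delta> ! (i - 1)"
      using x unfolding S_def by auto
    then have "\<delta> ! (i - 1) \<in> set \<delta>" by auto
    then have "\<delta> ! (i - 1) \<le> L" using assms(3) by blast
    then show ?thesis using i ds[of i] by auto
  qed
  have fin: "finite S" using bounded by (meson finite_atMost finite_subset subsetI atMost_iff)
  have "n - 1 + \<delta> ! 0 \<le> Max S" using Max_ge[OF fin first] .
  moreover have "ds ! 0 = n" using ds[of 0] by simp
  ultimately have "delta0 ds \<delta> = Max S - n"
    unfolding delta0_def Let_def S_def[symmetric] using first assms(2,4) by auto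
  moreover have "Max S \<le> n - 1 + L" using bounded Max_in[OF fin] first by blast
  ultimately show ?thesis using assms(4) unfolding ds_def by linarith
qed

lemma delta0_derivative_pair: "1 \<le> k \<Longrightarrow> 1 \<le> s \<Longrightarrow> delta0 [s, s - 1] [k] = k - 1"
proof -
  assume "1 \<le> k" "1 \<le> s"
  moreover have "{[s, s - 1] ! i + [k] ! (i - 1) | i. 1 \<le> i \<and> i \<le> length [k] \<and> [k] ! (i - 1) \<noteq> 0}
      = {s - 1 + k}"
    using \<open>1 \<le> k\<close> by (auto intro: exI[of _ 1])
  ultimately show ?thesis unfolding delta0_def Let_def by auto
qed

lemma homogeneous_coeffs_subres_derivative_pair:
  assumes "homogeneous_coeffs h G" and "1 \<le> k" and "1 \<le> s"
  shows "homogeneous_coeffs ((2 * k - 1) * h) (subres [(s, G), (s - 1, deriv G)] [k])"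
proof -
  have "homogeneous_coeffs ((delta0 (map fst [(s, G), (s - 1, deriv G)]) [k] + sum_list [k]) * h)
      (subres [(s, G), (s - 1, deriv G)] [k])"
    by (rule homogeneous_coeffs_subres) (use assms(1) in \<open>auto intro: homogeneous_coeffs_deriv\<close>)
  moreover have "delta0 (map fst [(s, G), (s - 1, deriv G)]) [k] + sum_list [k] = 2 * k - 1"
    using delta0_derivative_pair[OF assms(2,3)] assms(2) by simp
  ultimately show ?thesis by simp
qed

lemma subres_derivative_pair_coeff_above:
  assumes "1 \<le> k" and "k \<le> s" and "s - k < i"
  shows "subres [(s, G), (s - 1, G')] [k] i = 0"
  using assms delta0_derivative_pair[of k s]
  unfolding subres_def Let_def dp_def by (simp add: length_concat)

lemma length_le_sum_list: "\<forall>x\<in>set xs. 0 < (x::nat) \<Longrightarrow> length xs \<le> sum_list xs"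
  by (induction xs) auto

lemma finite_Mpart: "finite (Mpart n)"
proof -
  have "Mpart n \<subseteq> {xs. set xs \<subseteq> {..n} \<and> length xs \<le> n}"
  proof
    fix xs assume "xs \<in> Mpart n"
    then have "\<forall>x\<in>set xs. 0 < x" "sum_list xs = n" unfolding Mpart_def by auto
    then show "xs \<in> {xs. set xs \<subseteq> {..n} \<and> length xs \<le> n}"
      using length_le_sum_list member_le_sum_list[of _ xs] by fastforce
  qed
  then show ?thesis using finite_lists_length_le[of "{..n}" n] finite_subset by blast
qed

lemma conj_antimono: "k \<le> k' \<Longrightarrow> conj \<mu> k' \<le> conj \<mu> k"
  unfolding conj_def by (rule card_mono) auto

lemma conj_one: "\<forall>x\<in>set \<mu>. 0 < x \<Longrightarrow> conj \<mu> 1 = length \<mu>"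
proof -
  assume "\<forall>x\<in>set \<mu>. 0 < x"
  then have "{j. j < length \<mu> \<and> 1 \<le> \<mu> ! j} = {..<length \<mu>}"
    by (auto simp: Suc_le_eq)
  then show ?thesis unfolding conj_def by simp
qed

lemma conj_eq_sum: "conj \<mu> k = (\<Sum>j<length \<mu>. if k \<le> \<mu> ! j then 1 else 0)"
proof -
  have "conj \<mu> k = card {j \<in> {..<length \<mu>}. k \<le> \<mu> ! j}"
    unfolding conj_def by (rule arg_cong[where f = card]) auto
  then show ?thesis by (simp add: sum.inter_filter[symmetric])
qed

text \<open>Counting the cells of the Young diagram of \<open>\<mu>\<close> by columns and by rows.\<close>

lemma sum_conj_le_sum_list: "(\<Sum>k = 1..m. conj \<mu> k) \<le> sum_list \<mu>"
proof -
  have "(\<Sum>k = 1..m. conj \<mu> k) = (\<Sum>k = 1..m. \<Sum>j<length \<mu>. if k \<le> \<mu> ! j then 1 else 0)"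
    by (simp add: conj_eq_sum)
  also have "\<dots> = (\<Sum>j<length \<mu>. \<Sum>k = 1..m. if k \<le> \<mu> ! j then 1 else 0)"
    by (rule sum.swap)
  also have "\<dots> \<le> (\<Sum>j<length \<mu>. \<mu> ! j)"
  proof (rule sum_mono)
    fix j
    have "(\<Sum>k = 1..m. if k \<le> \<mu> ! j then 1 else 0) = card {k \<in> {1..m}. k \<le> \<mu> ! j}"
      by (simp add: sum.inter_filter[symmetric])
    also have "\<dots> \<le> card {1..\<mu> ! j}" by (rule card_mono) auto
    finally show "(\<Sum>k = 1..m. if k \<le> \<mu> ! j then 1 else 0::nat) \<le> \<mu> ! j" by simp
  qed
  also have "\<dots> = sum_list \<mu>" by (simp add: sum_list_sum_nth atLeast0LessThan)
  finally show ?thesis .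
qed

section \<open>The degree bound\<close>

definition floor_half :: "nat \<Rightarrow> nat" where
  "floor_half n = (n - 1) div 2"

definition ceil_half :: "nat \<Rightarrow> nat" where
  "ceil_half n = n - 1 - floor_half n"

definition degree_bound :: "nat \<Rightarrow> nat" where
  "degree_bound n = 2 * (2 * floor_half n - 1) * (2 * ceil_half n - 1)"

lemma floor_ceil_half:
  "8 \<le> n \<Longrightarrow> 3 \<le> floor_half n \<and> floor_half n \<le> ceil_half n \<and> ceil_half n \<le> floor_half n + 1
    \<and> ceil_half n + floor_half n + 1 = n"
  unfolding ceil_half_def floor_half_def by auto

lemma square_le_four_degree_bound:
  assumes "8 \<le> n"
  shows "(2 * int n - 1)^2 \<le> 4 * int (degree_bound n)"
proof -
  define m where "m = int (floor_half n)"
  have m: "3 \<le> m" "0 \<le> m * (m - 3)"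
    using floor_ceil_half[OF assms] unfolding m_def by auto
  have "int n = 2 * m + 1 \<and> int (ceil_half n) = m \<or> int n = 2 * m + 2 \<and> int (ceil_half n) = m + 1"
    using floor_ceil_half[OF assms] unfolding m_def by linarith
  moreover have "int (degree_bound n) = 2 * (2 * m - 1) * (2 * int (ceil_half n) - 1)"
    using floor_ceil_half[OF assms] unfolding degree_bound_def m_def by (simp add: of_nat_diff)
  ultimately consider
      "4 * int (degree_bound n) - (2 * int n - 1)^2 = 16 * (m * (m - 3)) + 8 * m + 7"
    | "4 * int (degree_bound n) - (2 * int n - 1)^2 = 16 * (m * (m - 3)) + 24 * m - 17"
    by (auto simp: algebra_simps power2_eq_square)
  then show ?thesis by cases (use m in linarith)+
qed

text \<open>The product \<open>2c(2S - 1)\<close> with \<open>S + c \<le> n\<close> is maximal near \<open>c = (2n - 1)/4\<close>, where it is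
  \<open>(2n - 1)\<^sup>2/8\<close>; balancing the conjugate as in \<open>degree_bound\<close> loses less than this.\<close>

lemma product_le_degree_bound:
  assumes "8 \<le> n" and "S + c \<le> n" and "1 \<le> S"
  shows "2 * c * (2 * S - 1) \<le> degree_bound n"
proof -
  have "4 * int (2 * c * (2 * S - 1)) = 8 * int c * (2 * int S - 1)"
    using assms(3) by (simp add: of_nat_diff)
  also have "\<dots> \<le> 8 * int c * (2 * (int n - int c) - 1)"
    using assms(2) by (intro mult_left_mono) auto
  also have "\<dots> = (2 * int n - 1)^2 - (2 * int n - 1 - 4 * int c)^2"
    by (simp add: algebra_simps power2_eq_square)
  also have "\<dots> \<le> 4 * int (degree_bound n)"
    using square_le_four_degree_bound[OF assms(1)] zero_le_power2[of "2 * int n - 1 - 4 * int c"]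
    by linarith
  finally have "int (2 * c * (2 * S - 1)) \<le> int (degree_bound n)" by linarith
  then show ?thesis by (rule of_nat_le_iff[THEN iffD1])
qed

lemma double_le_degree_bound:
  assumes "8 \<le> n"
  shows "2 * n \<le> degree_bound n"
proof -
  have "2 * 1 * (2 * (n - 1) - 1) \<le> degree_bound n"
    by (rule product_le_degree_bound) (use assms in auto)
  then show ?thesis using assms by linarith
qed

section \<open>Attaining the bound on the YHZ side\<close>

text \<open>The partition \<open>(3, 2, \<dots>, 2, 1, \<dots>, 1)\<close> of \<open>n\<close> whose conjugate is
  \<open>(\<lceil>(n - 1)/2\<rceil>, \<lfloor>(n - 1)/2\<rfloor>, 1)\<close>.\<close>

definition extremal_partition :: "nat \<Rightarrow> nat list" where
  "extremal_partition n = 3 # replicate (floor_half n - 1) 2 @ replicate (ceil_half n - floor_half n) 1"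

lemma hd_extremal_partition [simp]: "hd (extremal_partition n) = 3"
  unfolding extremal_partition_def by simp

lemma length_extremal_partition: "8 \<le> n \<Longrightarrow> length (extremal_partition n) = ceil_half n"
  using floor_ceil_half[of n] unfolding extremal_partition_def by simp

lemma nth_extremal_partition:
  "8 \<le> n \<Longrightarrow> j < ceil_half n \<Longrightarrow>
    extremal_partition n ! j = (if j = 0 then 3 else if j < floor_half n then 2 else 1)"
  using floor_ceil_half[of n] unfolding extremal_partition_def by (cases j) (auto simp: nth_append)

lemma extremal_partition_in_Mpart:
  assumes "8 \<le> n"
  shows "extremal_partition n \<in> Mpart n"
proof -
  have "sorted_wrt (\<ge>) (extremal_partition n)"
    unfolding sorted_wrt_iff_nth_less
    using nth_extremal_partition[OF assms] length_extremal_partition[OF assms] by auto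
  moreover have "\<forall>x\<in>set (extremal_partition n). 0 < x"
    unfolding extremal_partition_def by auto
  moreover have "sum_list (extremal_partition n) = 3 + (floor_half n - 1) * 2 + (ceil_half n - floor_half n)"
    unfolding extremal_partition_def by (simp add: sum_list_replicate)
  then have "sum_list (extremal_partition n) = n"
    using floor_ceil_half[OF assms] by (simp add: diff_mult_distrib)
  ultimately show ?thesis unfolding Mpart_def by auto
qed

lemma conj_extremal_partition:
  assumes "8 \<le> n"
  shows "conj (extremal_partition n) 1 = ceil_half n" and "conj (extremal_partition n) 2 = floor_half n"
    and "conj (extremal_partition n) 3 = 1"
proof -
  note nth = nth_extremal_partition[OF assms] and len = length_extremal_partition[OF assms]
    and halves = floor_ceil_half[OF assms]
  have "{j. j < length (extremal_partition n) \<and> extremal_partition n ! j \<ge> 1} = {0..<ceil_half n}"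
    using nth len by auto
  then show "conj (extremal_partition n) 1 = ceil_half n" unfolding conj_def by simp
  have "{j. j < length (extremal_partition n) \<and> extremal_partition n ! j \<ge> 2} = {0..<floor_half n}"
    using nth len halves by (auto split: if_splits)
  then show "conj (extremal_partition n) 2 = floor_half n" unfolding conj_def by simp
  have "{j. j < length (extremal_partition n) \<and> extremal_partition n ! j \<ge> 3} = {0}"
    using nth len halves by (auto split: if_splits)
  then show "conj (extremal_partition n) 3 = 1" unfolding conj_def by simp
qed

lemma sdeg_extremal_partition:
  assumes "8 \<le> n"
  shows "sdeg (extremal_partition n) 0 = n" and "sdeg (extremal_partition n) 1 = floor_half n + 1"
    and "sdeg (extremal_partition n) 2 = 1"
  using conj_extremal_partition[OF assms] floor_ceil_half[OF assms]
  by (simp_all add: sdeg_def numeral_3_eq_3 numeral_2_eq_2)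

lemma Dmin_linear:
  assumes "G 2 = 0"
  shows "Dmin 1 G 1 = G 1 * G 1"
proof -
  let ?M = "mat 2 2 (\<lambda>(r, k). rowvec (if even r then G else deriv G) (1 - (r div 2 + 1)) (2 * 1) k)"
  have "upper_triangular ?M"
    unfolding upper_triangular_def
  proof (intro allI impI)
    fix i j assume "i < dim_row ?M" "j < i"
    then have "i = 1" "j = 0" by auto
    then show "?M $$ (i, j) = 0" using assms by (simp add: rowvec_def deriv_def numeral_2_eq_2)
  qed
  then have "det ?M = prod_list (diag_mat ?M)"
    by (rule det_upper_triangular[of _ 2]) simp
  also have "\<dots> = G 1 * G 1"
    by (simp add: diag_mat_def rowvec_def deriv_def upt_rec)
  finally show ?thesis unfolding Dmin_def detf_def by simp
qed

lemma total_degree_Dmin_extremal_partition: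
  assumes n: "8 \<le> n" and "YHZ_assumption n"
  defines "G \<equiv> Gt n (extremal_partition n) 2"
  shows "total_degree (Dmin 1 G 1) = degree_bound n"
proof -
  note halves = floor_ceil_half[OF n] and conj = conj_extremal_partition[OF n]
    and sdeg = sdeg_extremal_partition[OF n]
  define G1 where "G1 = Gt n (extremal_partition n) 1"
  have G1: "G1 = subres [(n, Pgen n), (n - 1, deriv (Pgen n))] [ceil_half n]"
    unfolding G1_def using conj sdeg by simp
  have G: "G = subres [(floor_half n + 1, G1), (floor_half n + 1 - 1, deriv G1)] [floor_half n]"
    unfolding G_def G1_def using conj sdeg by (simp add: numeral_2_eq_2)
  have "homogeneous_coeffs ((2 * ceil_half n - 1) * 1) G1"
    unfolding G1 by (rule homogeneous_coeffs_subres_derivative_pair) (use halves homogeneous_coeffs_Pgen in auto)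
  then have hom: "homogeneous_coeffs ((2 * floor_half n - 1) * ((2 * ceil_half n - 1) * 1)) G"
    unfolding G by (rule homogeneous_coeffs_subres_derivative_pair) (use halves in auto)
  have "G 2 = 0"
    unfolding G by (rule subres_derivative_pair_coeff_above) (use halves in auto)
  then have Dmin: "Dmin 1 G 1 = G 1 * G 1" by (rule Dmin_linear)
  text \<open>\<open>G 1\<close> is the leading coefficient of \<open>G\<close>, since \<open>s\<^sub>2 = 1\<close>.\<close>
  have "G 1 \<noteq> 0"
    using assms(2) extremal_partition_in_Mpart[OF n] sdeg
    unfolding YHZ_assumption_def G_def by force
  moreover have "homogeneous (degree_bound n) (G 1 * G 1)"
    using homogeneous_mult[of _ "G 1" _ "G 1"] hom
    unfolding homogeneous_coeffs_def degree_bound_def by (metis mult_2 mult.assoc mult_1_right)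
  ultimately show ?thesis
    unfolding Dmin by (simp add: total_degree_eq_if_homogeneous)
qed

lemma finite_indexed_family:
  assumes "\<And>i j. P i j \<Longrightarrow> i < (a::nat) \<and> (j::nat) \<le> b i"
  shows "finite {f i j | i j. P i j}"
  by (rule finite_subset[of _ "\<Union>i<a. f i ` {..b i}"]) (use assms in fastforce)+

lemma finite_Sset: "finite (Sset n \<mu>)"
  unfolding Sset_def
  by (intro finite_UnI finite.insertI finite.emptyI
      finite_indexed_family[where a = "hd \<mu>" and b = "\<lambda>i. sdeg \<mu> i + conj \<mu> (i + 1)"]) auto

lemma degree_bound_le_d_YHZ:
  assumes n: "8 \<le> n" and "YHZ_assumption n"
  shows "degree_bound n \<le> d_YHZ n"
proof -
  let ?\<mu> = "extremal_partition n"
  have "Dmin 1 (Gt n ?\<mu> 2) 1 \<in> Sset n ?\<mu>"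
    unfolding Sset_def using conj_extremal_partition[OF n] sdeg_extremal_partition[OF n]
    by (intro UnI2 CollectI exI[of _ 2] exI[of _ 1]) (simp del: Gt.simps)
  then have "Dmin 1 (Gt n ?\<mu> 2) 1 \<in> (\<Union>\<mu>\<in>Mpart n. Sset n \<mu>)"
    using extremal_partition_in_Mpart[OF n] by blast
  moreover have "finite (\<Union>\<mu>\<in>Mpart n. Sset n \<mu>)"
    using finite_Mpart finite_Sset by blast
  ultimately show ?thesis
    unfolding d_YHZ_def total_degree_Dmin_extremal_partition[OF assms, symmetric]
    by (intro Max_ge) auto
qed

section \<open>Bounding the QXY side\<close>

lemma finite_Tset: "finite (Tset n \<mu>)"
proof -
  have "{RF n \<gamma> k | \<gamma> k. \<gamma> \<in> Mpart n \<and> lex_ge \<gamma> (conj_list \<mu>) \<and> k \<le> n - sum_list \<gamma>}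
      \<subseteq> (\<lambda>(\<gamma>, k). RF n \<gamma> k) ` (Mpart n \<times> {..n})"
    by (auto intro: image_eqI[where x = "(_, _)"])
  then have "finite {RF n \<gamma> k | \<gamma> k. \<gamma> \<in> Mpart n \<and> lex_ge \<gamma> (conj_list \<mu>) \<and> k \<le> n - sum_list \<gamma>}"
    by (rule finite_subset) (simp add: finite_Mpart)
  then show ?thesis
    unfolding Tset_def
    by (intro finite_UnI finite_indexed_family[where a = "hd \<mu>" and b = "\<lambda>i. conj \<mu> (i + 1)"]) auto
qed

lemma total_degree_RF_le:
  assumes n: "8 \<le> n" and "\<gamma> \<in> Mpart n"
  shows "total_degree (RF n \<gamma> k) \<le> degree_bound n"
proof -
  have pos: "\<forall>x\<in>set \<gamma>. 0 < x" and sum: "sum_list \<gamma> = n"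
    using assms(2) unfolding Mpart_def by auto
  have "\<gamma> \<noteq> []" and "1 \<le> \<gamma> ! 0"
    using pos sum n by (cases \<gamma>; auto)+
  then have "delta0 (map fst (Fs n (length \<gamma>))) \<gamma> \<le> n - 1"
    using sum member_le_sum_list[of _ \<gamma>] n by (intro delta0_Fs_le) auto
  moreover have "total_degree (RF n \<gamma> k) \<le> delta0 (map fst (Fs n (length \<gamma>))) \<gamma> + sum_list \<gamma>"
    using homogeneous_coeffs_RF total_degree_le_if_homogeneous unfolding homogeneous_coeffs_def by blast
  ultimately show ?thesis using double_le_degree_bound[OF n] sum by linarith
qed

lemma take_conj_list: "i \<le> hd \<mu> \<Longrightarrow> take i (conj_list \<mu>) = map (conj \<mu>) [1..<Suc i]"
  unfolding conj_list_def by (simp add: take_map take_upt del: upt_Suc)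

lemma total_degree_Dmin_Gq_le:
  assumes n: "8 \<le> n" and "\<mu> \<in> Mpart n" and i: "i + 1 \<le> hd \<mu>" and j: "j \<le> conj \<mu> (i + 1)"
  shows "total_degree (Dmin s (Gq n \<mu> i) j) \<le> degree_bound n"
proof -
  have pos: "\<forall>x\<in>set \<mu>. 0 < x" and sum: "sum_list \<mu> = n"
    using assms(2) unfolding Mpart_def by auto
  have conj1: "conj \<mu> 1 = length \<mu>" by (rule conj_one[OF pos])
  show ?thesis
  proof (cases i)
    case 0
    have "total_degree (Dmin s (Gq n \<mu> i) j) \<le> 2 * j * 1"
      using 0 homogeneous_Dmin[OF homogeneous_coeffs_Pgen] total_degree_le_if_homogeneous by simp
    moreover have "j \<le> n"
      using j 0 conj1 length_le_sum_list[OF pos] sum by simp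
    ultimately show ?thesis using double_le_degree_bound[OF n] by linarith
  next
    case (Suc i')
    define \<delta> where "\<delta> = map (conj \<mu>) [1..<Suc i]"
    define S where "S = sum_list \<delta>"
    have G: "Gq n \<mu> i = RF n \<delta>"
      unfolding \<delta>_def Suc using take_conj_list[of "Suc i'" \<mu>] i Suc by simp
    have \<delta>0: "\<delta> ! 0 = length \<mu>" "\<delta> \<noteq> []"
      unfolding \<delta>_def Suc using conj1 by (simp_all add: nth_Cons' del: upt_Suc)
    have "1 \<le> length \<mu>" using sum n by (cases \<mu>) auto
    have "\<forall>x\<in>set \<delta>. x \<le> length \<mu>"
      unfolding \<delta>_def using conj_antimono[of 1 _ \<mu>] conj1 by auto
    then have "delta0 (map fst (Fs n (length \<delta>))) \<delta> \<le> length \<mu> - 1"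
      using \<delta>0 \<open>1 \<le> length \<mu>\<close> n by (intro delta0_Fs_le) auto
    moreover have "length \<mu> \<le> S"
      unfolding S_def using \<delta>0 by (metis member_le_sum_list nth_mem length_greater_0_conv zero_le)
    ultimately have deg: "delta0 (map fst (Fs n (length \<delta>))) \<delta> + S \<le> 2 * S - 1"
      using \<open>1 \<le> length \<mu>\<close> by linarith
    have "S = (\<Sum>k = 1..i. conj \<mu> k)"
      unfolding S_def \<delta>_def
      by (simp only: sum_set_upt_conv_sum_list_nat[symmetric] set_upt atLeastLessThanSuc_atLeastAtMost)
    then have "S + conj \<mu> (i + 1) \<le> n"
      using sum_conj_le_sum_list[where m = "i + 1" and \<mu> = \<mu>] sum by simp
    then have "2 * conj \<mu> (i + 1) * (2 * S - 1) \<le> degree_bound n"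
      by (rule product_le_degree_bound[OF n]) (use \<open>length \<mu> \<le> S\<close> \<open>1 \<le> length \<mu>\<close> in linarith)
    moreover have "2 * j * (delta0 (map fst (Fs n (length \<delta>))) \<delta> + S) \<le> 2 * conj \<mu> (i + 1) * (2 * S - 1)"
      using j deg by (intro mult_mono) auto
    moreover have "homogeneous (2 * j * (delta0 (map fst (Fs n (length \<delta>))) \<delta> + S)) (Dmin s (Gq n \<mu> i) j)"
      unfolding G S_def by (rule homogeneous_Dmin[OF homogeneous_coeffs_RF])
    ultimately show ?thesis using total_degree_le_if_homogeneous by (meson order_trans)
  qed
qed

lemma total_degree_Tset_le:
  assumes n: "8 \<le> n" and "\<mu> \<in> Mpart n" and "p \<in> Tset n \<mu>"
  shows "total_degree p \<le> degree_bound n"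
  using assms(3) unfolding Tset_def
  by (auto intro: total_degree_RF_le[OF n] total_degree_Dmin_Gq_le[OF n assms(2)])

lemma d_QXY_le_degree_bound:
  assumes n: "8 \<le> n"
  shows "d_QXY n \<le> degree_bound n"
proof -
  let ?\<mu> = "extremal_partition n"
  have "Dmin n (Gq n ?\<mu> 0) 1 \<in> Tset n ?\<mu>"
    unfolding Tset_def using conj_extremal_partition[OF n] floor_ceil_half[OF n]
    by (intro UnI2 CollectI exI[of _ 0] exI[of _ 1]) simp
  then have "(\<Union>\<mu>\<in>Mpart n. Tset n \<mu>) \<noteq> {}"
    using extremal_partition_in_Mpart[OF n] by blast
  moreover have "finite (\<Union>\<mu>\<in>Mpart n. Tset n \<mu>)"
    using finite_Mpart finite_Tset by blast
  ultimately show ?thesis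
    unfolding d_QXY_def using total_degree_Tset_le[OF n] by (auto simp: Max_le_iff)
qed

theorem mainTheorem8:
  fixes n :: nat
  assumes "8 \<le> n"
    and "YHZ_assumption n"
  shows "d_YHZ n \<ge> d_QXY n"
  using d_QXY_le_degree_bound[OF assms(1)] degree_bound_le_d_YHZ[OF assms] by (rule order_trans)

end
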